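(* Let $A\in {\operatorname{\mathsf{TPD}}}_n(\mathbb{S}_{\max}^\vee)$, and set $\gamma_{i}=a_{ii}$ for $i\in [n]$. Assume that $\gamma_{1}\succeq \gamma_{2} \succeq \cdots \succeq \gamma_{n}$, and define $B_k=\gamma_k I\ominus A$ for some $k \in [n]$. Then, all the diagonal entries of $(B_k)^{\mathrm{adj}}$ are non-zero and they are all in $\mathbb{S}_{\max}^\circ$ except possibly the $k$-th diagonal entry, which is also in $\mathbb{S}_{\max}^\circ$ if and only if $\gamma_k$ is not a simple $\mathbb{S}_{\max}$-eigenvalue.
   Context: $\mathbb{S}_{\max}$ is the symmetrized tropical semiring over a divisible totally ordered abelian group, with zero $\mathbf{0}$, unit $\mathbf{1}$, minus $\ominus$; $\mathbb{S}_{\max}^\vee$ is the set of signed elements and $\mathbb{S}_{\max}^\circ$ the set of balanced elements ($c\ominus c$). $a\preceq b$ iff $b=a\oplus b$. $A\in{\operatorname{\mathsf{TPD}}}_n(\mathbb{S}_{\max}^\vee)$: $A$ symmetric with signed entries, $\mathbf{0}<a_{ii}$ and $a_{ij}^2<a_{ii}a_{jj}$ for $i\ne j$ (where $a<b$ iff $b\ominus a$ is positive). $(M^{\mathrm{adj}})_{ij}=(\ominus\mathbf{1})^{i+j}\det M[\hat j,\hat i]$ with the signed determinant. The $\mathbb{S}_{\max}$-eigenvalues of $A$ are its diagonal entries, counted with multiplicity; $\gamma_k$ is simple iff it occurs once, i.e. $\gamma_{k-1}\succ\gamma_k\succ\gamma_{k+1}$ (convention $\gamma_{n+1}=\mathbf{0}$,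 and $a\succ b$ means $b\preceq a$, $a\ne b$). *)

theory Defs
  imports "HOL-Combinatorics.Permutations"
begin

text \<open>Elements: the zero (bottom), and for every g in the group G the positive element
  (Pos g), the negative element (Neg g = minus Pos g) and the balanced element (Bal g = Pos g minus Pos g).\<close>

datatype 'g smax = SZero | Pos 'g | Neg 'g | Bal 'g

fun md :: "'g smax \<Rightarrow> 'g" where
  "md (Pos a) = a" | "md (Neg a) = a" | "md (Bal a) = a" | "md SZero = undefined"

fun splus :: "'g::linorder smax \<Rightarrow> 'g smax \<Rightarrow> 'g smax" where
  "splus SZero y = y"
| "splus x SZero = x"
| "splus x y = (if md y < md x then x else if md x < md y then y
                else if x = y then x else Bal (md x))"

fun stimes :: "'g::ab_group_add smax \<Rightarrow> 'g smax \<Rightarrow> 'g smax" where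
  "stimes SZero y = SZero"
| "stimes x SZero = SZero"
| "stimes (Pos a) (Pos b) = Pos (a + b)"
| "stimes (Pos a) (Neg b) = Neg (a + b)"
| "stimes (Neg a) (Pos b) = Neg (a + b)"
| "stimes (Neg a) (Neg b) = Pos (a + b)"
| "stimes x y = Bal (md x + md y)"

instantiation smax :: (linordered_ab_group_add) comm_monoid_add
begin
definition zero_smax_def: "0 = SZero"
definition plus_smax_def: "x + y = splus x y"
instance
proof
  fix a b c :: "'a smax"
  show "a + b + c = a + (b + c)"
    unfolding plus_smax_def
    by (cases a; cases b; cases c) auto
  show "a + b = b + a"
    unfolding plus_smax_def
    by (cases a; cases b) auto
  show "0 + a = a" unfolding plus_smax_def zero_smax_def by simp
qed
end

instantiation smax :: (linordered_ab_group_add) comm_monoid_mult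
begin
definition one_smax_def: "1 = Pos 0"
definition times_smax_def: "x * y = stimes x y"
instance
proof
  fix a b c :: "'a smax"
  show "a * b * c = a * (b * c)"
    unfolding times_smax_def
    by (cases a; cases b; cases c) (auto simp: add.assoc)
  show "a * b = b * a"
    unfolding times_smax_def
    by (cases a; cases b) (auto simp: add.commute)
  show "1 * a = a" unfolding times_smax_def one_smax_def by (cases a) auto
qed
end

fun sneg :: "'g smax \<Rightarrow> 'g smax" where
  "sneg SZero = SZero" | "sneg (Pos a) = Neg a" | "sneg (Neg a) = Pos a" | "sneg (Bal a) = Bal a"

definition sminus :: "'g::linordered_ab_group_add smax \<Rightarrow> 'g smax \<Rightarrow> 'g smax" where
  "sminus a b = a + sneg b"

definition signed :: "'g smax \<Rightarrow> bool" where
  "signed x \<longleftrightarrow> x = SZero \<or> (\<exists>g. x = Pos g) \<or> (\<exists>g. x = Neg g)"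

definition balanced :: "'g::linordered_ab_group_add smax \<Rightarrow> bool" where
  "balanced x \<longleftrightarrow> (\<exists>c. x = sminus c c)"

definition sless :: "'g::linordered_ab_group_add smax \<Rightarrow> 'g smax \<Rightarrow> bool" where
  "sless a b \<longleftrightarrow> (\<exists>g. sminus b a = Pos g)"

definition sprec :: "'g::linordered_ab_group_add smax \<Rightarrow> 'g smax \<Rightarrow> bool" where
  "sprec a b \<longleftrightarrow> b = a + b"

definition ssucc :: "'g::linordered_ab_group_add smax \<Rightarrow> 'g smax \<Rightarrow> bool" where
  "ssucc a b \<longleftrightarrow> sprec b a \<and> a \<noteq> b"

definition divisible_group :: "'g::ab_group_add itself \<Rightarrow> bool" where
  "divisible_group _ \<longleftrightarrow> (\<forall>(g::'g) (m::nat). m > 0 \<longrightarrow> (\<exists>h. (\<Sum>_<m. h) = g))"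

type_synonym 'g smat = "nat \<Rightarrow> nat \<Rightarrow> 'g smax"

definition psign :: "(nat \<Rightarrow> nat) \<Rightarrow> 'g::linordered_ab_group_add smax" where
  "psign \<sigma> = (if evenperm \<sigma> then 1 else sneg 1)"

definition sdet :: "nat \<Rightarrow> 'g::linordered_ab_group_add smat \<Rightarrow> 'g smax" where
  "sdet n M = (\<Sum>\<sigma> | \<sigma> permutes {1..n}. psign \<sigma> * (\<Prod>i = 1..n. M i (\<sigma> i)))"

definition skipidx :: "nat \<Rightarrow> nat \<Rightarrow> nat" where
  "skipidx r i = (if i < r then i else i + 1)"

definition minor :: "'g smat \<Rightarrow> nat \<Rightarrow> nat \<Rightarrow> 'g smat" where
  "minor M r c = (\<lambda>i j. M (skipidx r i) (skipidx c j))"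

definition sadj :: "nat \<Rightarrow> 'g::linordered_ab_group_add smat \<Rightarrow> 'g smat" where
  "sadj n M = (\<lambda>i j. (sneg 1) ^ (i + j) * sdet (n - 1) (minor M j i))"

definition TPD :: "nat \<Rightarrow> 'g::linordered_ab_group_add smat \<Rightarrow> bool" where
  "TPD n A \<longleftrightarrow>
     (\<forall>i\<in>{1..n}. \<forall>j\<in>{1..n}. A i j = A j i \<and> signed (A i j)) \<and>
     (\<forall>i\<in>{1..n}. sless 0 (A i i)) \<and>
     (\<forall>i\<in>{1..n}. \<forall>j\<in>{1..n}. i \<noteq> j \<longrightarrow> sless (A i j ^ 2) (A i i * A j j))"

definition shift_mat :: "'g::linordered_ab_group_add smax \<Rightarrow> 'g smat \<Rightarrow> 'g smat" where
  "shift_mat \<gamma> A = (\<lambda>i j. sminus (if i = j then \<gamma> else 0) (A i j))"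

text \<open>The S_max-eigenvalues of A in TPD are its diagonal entries, counted with multiplicity;
  the k-th one is simple iff it occurs exactly once.\<close>
definition simple_eig :: "nat \<Rightarrow> 'g smat \<Rightarrow> nat \<Rightarrow> bool" where
  "simple_eig n A k \<longleftrightarrow> card {i\<in>{1..n}. A i i = A k k} = 1"

end

theory Submission
  imports Defs
begin

text \<open>Write \<open>|x|\<close> for the modulus \<open>md x\<close>, computed in the value group. For any
  \<open>\<gamma>\<close>, the entries of \<open>B = \<gamma>I \<ominus> A\<close> satisfy
  \<open>|b\<^sub>i\<^sub>j|\<^sup>2 = |a\<^sub>i\<^sub>j|\<^sup>2 < |a\<^sub>i\<^sub>i||a\<^sub>j\<^sub>j| \<le> |b\<^sub>i\<^sub>i||b\<^sub>j\<^sub>j|\<close> for \<open>i \<noteq> j\<close>, because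
  \<open>|\<gamma> \<ominus> a\<^sub>j\<^sub>j| \<ge> |a\<^sub>j\<^sub>j|\<close>. In a matrix with this strict diagonal dominance the
  identity permutation strictly outweighs every other term of the determinant, so each
  principal minor is the product of its diagonal and \<open>(B\<^sup>a\<^sup>d\<^sup>j)\<^sub>i\<^sub>i = \<Prod>\<^sub>j\<^sub>\<noteq>\<^sub>i (\<gamma> \<ominus> a\<^sub>j\<^sub>j)\<close>.
  For \<open>\<gamma> = \<gamma>\<^sub>k\<close> the factor \<open>\<gamma>\<^sub>k \<ominus> \<gamma>\<^sub>j\<close> is non-zero and balanced exactly when
  \<open>\<gamma>\<^sub>j = \<gamma>\<^sub>k\<close>, so \<open>(B\<^sup>a\<^sup>d\<^sup>j)\<^sub>i\<^sub>i\<close> is balanced iff \<open>\<gamma>\<^sub>k\<close> occurs at some index \<open>j \<noteq> i\<close>: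
  always for \<open>i \<noteq> k\<close>, and for \<open>i = k\<close> iff \<open>\<gamma>\<^sub>k\<close> is not simple.\<close>

lemma smax_one_neq_zero: "(1::'g::linordered_ab_group_add smax) \<noteq> 0"
  by (simp add: one_smax_def zero_smax_def)

lemma smax_mult_eq_0_iff:
  fixes x y :: "'g::linordered_ab_group_add smax"
  shows "x * y = 0 \<longleftrightarrow> x = 0 \<or> y = 0"
  by (cases x; cases y) (simp_all add: times_smax_def zero_smax_def)

lemma md_mult:
  fixes x y :: "'g::linordered_ab_group_add smax"
  shows "x \<noteq> 0 \<Longrightarrow> y \<noteq> 0 \<Longrightarrow> md (x * y) = md x + md y"
  by (cases x; cases y) (simp_all add: times_smax_def zero_smax_def)

lemma smax_prod_eq_0_iff:
  fixes f :: "'a \<Rightarrow> 'g::linordered_ab_group_add smax"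
  shows "finite S \<Longrightarrow> prod f S = 0 \<longleftrightarrow> (\<exists>s\<in>S. f s = 0)"
  by (induction S rule: finite_induct) (simp_all add: smax_mult_eq_0_iff smax_one_neq_zero)

lemma md_prod:
  fixes f :: "'a \<Rightarrow> 'g::linordered_ab_group_add smax"
  shows "finite S \<Longrightarrow> \<forall>s\<in>S. f s \<noteq> 0 \<Longrightarrow> md (prod f S) = (\<Sum>s\<in>S. md (f s))"
  by (induction S rule: finite_induct) (simp_all add: one_smax_def md_mult smax_prod_eq_0_iff)

lemma balanced_iff: "balanced (x::'g::linordered_ab_group_add smax) \<longleftrightarrow> x = 0 \<or> (\<exists>g. x = Bal g)"
proof
  assume "balanced x"
  then obtain c where "x = sminus c c" unfolding balanced_def by blast
  then show "x = 0 \<or> (\<exists>g. x = Bal g)"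
    by (cases c) (auto simp: sminus_def plus_smax_def zero_smax_def)
next
  assume "x = 0 \<or> (\<exists>g. x = Bal g)"
  then consider "x = SZero" | g where "x = Bal g" by (auto simp: zero_smax_def)
  then show "balanced x"
  proof cases
    case 1
    then show ?thesis unfolding balanced_def
      by (intro exI[of _ SZero]) (simp add: sminus_def plus_smax_def)
  next
    case (2 g)
    then show ?thesis unfolding balanced_def
      by (intro exI[of _ "Pos g"]) (simp add: sminus_def plus_smax_def)
  qed
qed

lemma balanced_mult_iff:
  fixes x y :: "'g::linordered_ab_group_add smax"
  shows "x \<noteq> 0 \<Longrightarrow> y \<noteq> 0 \<Longrightarrow> balanced (x * y) \<longleftrightarrow> balanced x \<or> balanced y"
  by (cases x; cases y) (simp_all add: balanced_iff times_smax_def zero_smax_def)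

lemma balanced_prod_iff:
  fixes f :: "'a \<Rightarrow> 'g::linordered_ab_group_add smax"
  shows "finite S \<Longrightarrow> \<forall>s\<in>S. f s \<noteq> 0 \<Longrightarrow> balanced (prod f S) \<longleftrightarrow> (\<exists>s\<in>S. balanced (f s))"
proof (induction S rule: finite_induct)
  case empty
  then show ?case by (simp add: balanced_iff one_smax_def zero_smax_def)
next
  case (insert x F)
  then show ?case by (simp add: balanced_mult_iff smax_prod_eq_0_iff)
qed

lemma sless_Pos_iff: "sless (Pos a) (Pos b) \<longleftrightarrow> a < b"
  by (auto simp: sless_def sminus_def plus_smax_def)

lemma sminus_Pos_neq_zero_md_ge:
  "sminus \<gamma> (Pos g) \<noteq> 0 \<and> g \<le> md (sminus \<gamma> (Pos g))"
  by (cases \<gamma>) (auto simp: sminus_def plus_smax_def zero_smax_def)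

lemma balanced_sminus_Pos_iff: "balanced (sminus (Pos a) (Pos b)) \<longleftrightarrow> a = b"
  by (auto simp: balanced_iff sminus_def plus_smax_def zero_smax_def)

lemma smax_sum_less:
  fixes f :: "'a \<Rightarrow> 'g::linordered_ab_group_add smax"
  assumes "finite S" "\<forall>s\<in>S. f s = 0 \<or> md (f s) < c"
  shows "sum f S = 0 \<or> md (sum f S) < c"
  using assms
proof (induction S rule: finite_induct)
  case (insert x F)
  then show ?case
    by (cases "f x"; cases "sum f F") (auto simp: plus_smax_def zero_smax_def)
qed simp

lemma smax_sum_eq_dominant_term:
  fixes f :: "'a \<Rightarrow> 'g::linordered_ab_group_add smax"
  assumes "finite S" "s\<^sub>0 \<in> S" "f s\<^sub>0 \<noteq> 0"
    and "\<forall>s\<in>S - {s\<^sub>0}. f s = 0 \<or> md (f s) < md (f s\<^sub>0)"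
  shows "sum f S = f s\<^sub>0"
proof -
  have rest: "sum f (S - {s\<^sub>0}) = 0 \<or> md (sum f (S - {s\<^sub>0})) < md (f s\<^sub>0)"
    using assms by (intro smax_sum_less) auto
  have "sum f S = f s\<^sub>0 + sum f (S - {s\<^sub>0})"
    using assms(1,2) by (simp add: sum.remove)
  also have "\<dots> = f s\<^sub>0"
    using rest assms(3)
    by (cases "f s\<^sub>0"; cases "sum f (S - {s\<^sub>0})") (auto simp: plus_smax_def zero_smax_def)
  finally show ?thesis .
qed

definition strictly_diag_dominant :: "nat \<Rightarrow> 'g::linordered_ab_group_add smat \<Rightarrow> bool" where
  "strictly_diag_dominant m C \<longleftrightarrow> (\<forall>a\<in>{1..m}. C a a \<noteq> 0) \<and>
     (\<forall>a\<in>{1..m}. \<forall>b\<in>{1..m}. a \<noteq> b \<longrightarrow>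
        C a b = 0 \<or> md (C a b) + md (C a b) < md (C a a) + md (C b b))"

lemma strictly_diag_dominant_permutation_term_less:
  fixes C :: "'g::linordered_ab_group_add smat"
  assumes dom: "strictly_diag_dominant m C" and perm: "\<sigma> permutes {1..m}" and "\<sigma> \<noteq> id"
    and nz: "\<forall>i\<in>{1..m}. C i (\<sigma> i) \<noteq> 0"
  shows "(\<Sum>i=1..m. md (C i (\<sigma> i))) < (\<Sum>i=1..m. md (C i i))"
proof -
  let ?h = "\<lambda>i. md (C i (\<sigma> i))" and ?e = "\<lambda>i. md (C i i)"
  have off: "?h i + ?h i < ?e i + ?e (\<sigma> i)" if i: "i \<in> {1..m}" "\<sigma> i \<noteq> i" for i
  proof -
    have "\<sigma> i \<in> {1..m}"
      using permutes_in_image[OF perm] i(1) by blast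
    then have "C i (\<sigma> i) = 0 \<or> ?h i + ?h i < ?e i + ?e (\<sigma> i)"
      using dom i unfolding strictly_diag_dominant_def by metis
    then show ?thesis
      using nz i(1) by blast
  qed
  have le: "?h i + ?h i \<le> ?e i + ?e (\<sigma> i)" if "i \<in> {1..m}" for i
    using off[OF that] by (cases "\<sigma> i = i") simp_all
  obtain j where j: "j \<in> {1..m}" "\<sigma> j \<noteq> j"
    using \<open>\<sigma> \<noteq> id\<close> perm by (metis eq_id_iff permutes_not_in)
  have "(\<Sum>i=1..m. ?h i + ?h i) < (\<Sum>i=1..m. ?e i + ?e (\<sigma> i))"
  proof (rule sum_strict_mono_ex1)
    show "\<forall>i\<in>{1..m}. ?h i + ?h i \<le> ?e i + ?e (\<sigma> i)"
      using le by blast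
    show "\<exists>i\<in>{1..m}. ?h i + ?h i < ?e i + ?e (\<sigma> i)"
      using off j by blast
  qed simp
  also have "\<dots> = (\<Sum>i=1..m. ?e i) + (\<Sum>i=1..m. ?e i)"
    using sum.permute[OF perm, of ?e] by (simp add: sum.distrib comp_def)
  finally have "(\<Sum>i=1..m. ?h i) + (\<Sum>i=1..m. ?h i) < (\<Sum>i=1..m. ?e i) + (\<Sum>i=1..m. ?e i)"
    by (simp only: sum.distrib)
  then show ?thesis
    by (meson add_mono not_less)
qed

lemma sdet_strictly_diag_dominant:
  fixes C :: "'g::linordered_ab_group_add smat"
  assumes dom: "strictly_diag_dominant m C"
  shows "sdet m C = (\<Prod>a=1..m. C a a)"
proof -
  let ?t = "\<lambda>\<sigma>. psign \<sigma> * (\<Prod>i=1..m. C i (\<sigma> i)) :: 'g smax"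
  have diag_nz: "\<forall>a\<in>{1..m}. C a a \<noteq> 0"
    using dom unfolding strictly_diag_dominant_def by blast
  have psign: "psign \<sigma> \<noteq> (0::'g smax)" "md (psign \<sigma> :: 'g smax) = 0" for \<sigma>
    by (auto simp: psign_def one_smax_def zero_smax_def)
  have t_id: "?t id = (\<Prod>a=1..m. C a a)"
    by (simp add: psign_def)
  have "?t \<sigma> = 0 \<or> md (?t \<sigma>) < md (?t id)" if "\<sigma> permutes {1..m}" "\<sigma> \<noteq> id" for \<sigma>
  proof (cases "\<forall>i\<in>{1..m}. C i (\<sigma> i) \<noteq> 0")
    case True
    then show ?thesis
      using strictly_diag_dominant_permutation_term_less[OF dom that True] diag_nz
      by (simp add: t_id md_mult psign smax_prod_eq_0_iff md_prod)
  qed (simp add: smax_prod_eq_0_iff smax_mult_eq_0_iff)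
  moreover have "?t id \<noteq> 0"
    unfolding t_id using diag_nz by (simp add: smax_prod_eq_0_iff)
  ultimately have "sdet m C = ?t id"
    unfolding sdet_def
    by (intro smax_sum_eq_dominant_term) (auto simp: finite_permutations)
  then show ?thesis
    using t_id by simp
qed

lemma bij_betw_skipidx: "i \<in> {1..n} \<Longrightarrow> bij_betw (skipidx i) {1..n-1} ({1..n} - {i})"
proof (rule bij_betw_imageI)
  show "inj_on (skipidx i) {1..n-1}"
    by (auto simp: inj_on_def skipidx_def split: if_splits)
  assume i: "i \<in> {1..n}"
  have "j \<in> skipidx i ` {1..n-1}" if "j \<in> {1..n} - {i}" for j
  proof (cases "j < i")
    case True
    then show ?thesis using i that by (auto simp: skipidx_def image_iff intro!: bexI[of _ j])
  next
    case False
    then show ?thesis using i that by (auto simp: skipidx_def image_iff intro!: bexI[of _ "j - 1"])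
  qed
  moreover have "skipidx i ` {1..n-1} \<subseteq> {1..n} - {i}"
    using i by (auto simp: skipidx_def)
  ultimately show "skipidx i ` {1..n-1} = {1..n} - {i}"
    by blast
qed

lemma strictly_diag_dominant_minor:
  assumes "strictly_diag_dominant n C" "i \<in> {1..n}"
  shows "strictly_diag_dominant (n - 1) (minor C i i)"
proof -
  have "skipidx i a \<in> {1..n}" "skipidx i a \<noteq> skipidx i b \<longleftrightarrow> a \<noteq> b"
    if "a \<in> {1..n-1}" "b \<in> {1..n-1}" for a b
    using bij_betw_skipidx[OF assms(2)] that unfolding bij_betw_def inj_on_def by blast+
  then show ?thesis
    using assms(1) unfolding strictly_diag_dominant_def minor_def by blast
qed

lemma sadj_diag_strictly_diag_dominant:
  fixes C :: "'g::linordered_ab_group_add smat"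
  assumes dom: "strictly_diag_dominant n C" and i: "i \<in> {1..n}"
  shows "sadj n C i i = (\<Prod>j\<in>{1..n} - {i}. C j j)"
proof -
  have sign: "(sneg 1 :: 'g smax) ^ (i + i) = 1"
  proof -
    have "(sneg 1 :: 'g smax) ^ 2 = 1"
      by (simp add: power2_eq_square one_smax_def times_smax_def)
    then show ?thesis
      by (metis mult_2 power_mult power_one)
  qed
  have "sdet (n - 1) (minor C i i) = (\<Prod>a=1..n-1. C (skipidx i a) (skipidx i a))"
    using sdet_strictly_diag_dominant[OF strictly_diag_dominant_minor[OF dom i]]
    by (simp add: minor_def)
  also have "\<dots> = (\<Prod>j\<in>{1..n} - {i}. C j j)"
    using prod.reindex_bij_betw[OF bij_betw_skipidx[OF i]] .
  finally show ?thesis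
    by (simp add: sadj_def sign)
qed

lemma sadj_diag_neq_zero_strictly_diag_dominant:
  assumes "strictly_diag_dominant n C" "i \<in> {1..n}"
  shows "sadj n C i i \<noteq> 0"
  using assms unfolding sadj_diag_strictly_diag_dominant[OF assms]
  by (simp add: smax_prod_eq_0_iff strictly_diag_dominant_def)

lemma balanced_sadj_diag_strictly_diag_dominant:
  assumes "strictly_diag_dominant n C" "i \<in> {1..n}"
  shows "balanced (sadj n C i i) \<longleftrightarrow> (\<exists>j\<in>{1..n} - {i}. balanced (C j j))"
  using assms unfolding sadj_diag_strictly_diag_dominant[OF assms]
  by (intro balanced_prod_iff) (auto simp: strictly_diag_dominant_def)

lemma TPD_signed:
  assumes "TPD n A" "i \<in> {1..n}" "j \<in> {1..n}"
  shows "signed (A i j)"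
  using assms(1)[unfolded TPD_def, THEN conjunct1, rule_format, OF assms(2,3)] by (rule conjunct2)

lemma TPD_diag_positive:
  assumes "TPD n A" "i \<in> {1..n}"
  shows "sless 0 (A i i)"
  using assms(1)[unfolded TPD_def, THEN conjunct2, THEN conjunct1, rule_format, OF assms(2)] .

lemma TPD_off_diag_sless:
  assumes "TPD n A" "i \<in> {1..n}" "j \<in> {1..n}" "i \<noteq> j"
  shows "sless (A i j ^ 2) (A i i * A j j)"
  using assms(1)[unfolded TPD_def, THEN conjunct2, THEN conjunct2, rule_format, OF assms(2-4)] .

lemma TPD_diag_Pos:
  assumes "TPD n A" "i \<in> {1..n}"
  obtains g where "A i i = Pos g"
proof -
  obtain g where "sminus (A i i) 0 = Pos g"
    using TPD_diag_positive[OF assms] unfolding sless_def by blast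
  then show ?thesis
    using that by (cases "A i i") (simp_all add: sminus_def zero_smax_def plus_smax_def)
qed

lemma TPD_off_diag_less:
  assumes tpd: "TPD n A" and x: "x \<in> {1..n}" and y: "y \<in> {1..n}" and "x \<noteq> y"
  shows "A x y = 0 \<or> md (A x y) + md (A x y) < md (A x x) + md (A y y)"
proof (cases "A x y = 0")
  case False
  obtain m where m: "A x y = Pos m \<or> A x y = Neg m"
    using TPD_signed[OF tpd x y] False by (auto simp: signed_def zero_smax_def)
  then have "A x y ^ 2 = Pos (m + m)"
    by (auto simp: power2_eq_square times_smax_def)
  moreover obtain g\<^sub>x where "A x x = Pos g\<^sub>x"
    by (rule TPD_diag_Pos[OF tpd x])
  moreover obtain g\<^sub>y where "A y y = Pos g\<^sub>y"
    by (rule TPD_diag_Pos[OF tpd y])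
  ultimately show ?thesis
    using TPD_off_diag_sless[OF assms] m by (auto simp: times_smax_def sless_Pos_iff)
qed simp

lemma strictly_diag_dominant_shift_mat:
  fixes A :: "'g::linordered_ab_group_add smat"
  assumes tpd: "TPD n A"
  shows "strictly_diag_dominant n (shift_mat \<gamma> A)"
  unfolding strictly_diag_dominant_def
proof (intro conjI ballI impI)
  have diag: "shift_mat \<gamma> A a a \<noteq> 0 \<and> md (A a a) \<le> md (shift_mat \<gamma> A a a)" if a: "a \<in> {1..n}" for a
  proof -
    obtain g where "A a a = Pos g"
      by (rule TPD_diag_Pos[OF tpd a])
    then show ?thesis
      by (simp add: shift_mat_def sminus_Pos_neq_zero_md_ge)
  qed
  show "shift_mat \<gamma> A a a \<noteq> 0" if "a \<in> {1..n}" for a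
    using diag that by blast
  fix a b assume ab: "a \<in> {1..n}" "b \<in> {1..n}" "a \<noteq> b"
  have off: "shift_mat \<gamma> A a b = sneg (A a b)"
    using ab by (simp add: shift_mat_def sminus_def)
  have "md (A a a) + md (A b b) \<le> md (shift_mat \<gamma> A a a) + md (shift_mat \<gamma> A b b)"
    using diag ab by (simp add: add_mono)
  then show "shift_mat \<gamma> A a b = 0 \<or> md (shift_mat \<gamma> A a b) + md (shift_mat \<gamma> A a b)
      < md (shift_mat \<gamma> A a a) + md (shift_mat \<gamma> A b b)"
    using TPD_off_diag_less[OF tpd ab] unfolding off
    by (cases "A a b") (auto simp: zero_smax_def)
qed

lemma balanced_shift_mat_diag_iff:
  assumes tpd: "TPD n A" and j: "j \<in> {1..n}" and k: "k \<in> {1..n}"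
  shows "balanced (shift_mat (A k k) A j j) \<longleftrightarrow> A j j = A k k"
proof -
  obtain g\<^sub>j where "A j j = Pos g\<^sub>j"
    by (rule TPD_diag_Pos[OF tpd j])
  moreover obtain g\<^sub>k where "A k k = Pos g\<^sub>k"
    by (rule TPD_diag_Pos[OF tpd k])
  ultimately show ?thesis
    by (auto simp: shift_mat_def balanced_sminus_Pos_iff)
qed

lemma simple_eig_iff:
  assumes "k \<in> {1..n}"
  shows "simple_eig n A k \<longleftrightarrow> (\<forall>j\<in>{1..n} - {k}. A j j \<noteq> A k k)"
proof -
  let ?S = "{i\<in>{1..n}. A i i = A k k}"
  have "k \<in> ?S"
    using assms by simp
  have "card ?S = 1 \<longleftrightarrow> ?S = {k}"
  proof
    assume "card ?S = 1"
    then obtain x where x: "?S = {x}"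
      by (rule card_1_singletonE)
    have "k = x"
      using \<open>k \<in> ?S\<close> unfolding x by simp
    then show "?S = {k}"
      using x by simp
  qed simp
  then show ?thesis
    unfolding simple_eig_def using assms by blast
qed

theorem proposition5p1:
  fixes A :: "'g::linordered_ab_group_add smat" and n k :: nat
  assumes div: "divisible_group TYPE('g)"
    and tpd: "TPD n A"
    and ord: "\<forall>i. 1 \<le> i \<and> i < n \<longrightarrow> sprec (A (i + 1) (i + 1)) (A i i)"
    and k: "k \<in> {1..n}"
  shows "(\<forall>i\<in>{1..n}. sadj n (shift_mat (A k k) A) i i \<noteq> 0) \<and>
         (\<forall>i\<in>{1..n}. i \<noteq> k \<longrightarrow> balanced (sadj n (shift_mat (A k k) A) i i)) \<and>
         (balanced (sadj n (shift_mat (A k k) A) k k) \<longleftrightarrow> \<not> simple_eig n A k)"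
proof -
  let ?B = "shift_mat (A k k) A"
  have dom: "strictly_diag_dominant n ?B"
    using strictly_diag_dominant_shift_mat[OF tpd] .
  have balanced_adj: "balanced (sadj n ?B i i) \<longleftrightarrow> (\<exists>j\<in>{1..n} - {i}. A j j = A k k)"
    if "i \<in> {1..n}" for i
    using balanced_sadj_diag_strictly_diag_dominant[OF dom that] balanced_shift_mat_diag_iff[OF tpd _ k]
    by simp
  show ?thesis
  proof (intro conjI ballI impI)
    show "sadj n ?B i i \<noteq> 0" if "i \<in> {1..n}" for i
      using sadj_diag_neq_zero_strictly_diag_dominant[OF dom that] .
    show "balanced (sadj n ?B i i)" if "i \<in> {1..n}" "i \<noteq> k" for i
      using balanced_adj[OF that(1)] that k by blast
    show "balanced (sadj n ?B k k) \<longleftrightarrow> \<not> simple_eig n A k"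
      using balanced_adj[OF k] simple_eig_iff[OF k] by blast
  qed
qed

end
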